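(* For all $n\ge1$ and all $k,k'\in[n]$, the relations $\preceq_k$ and $\preceq_{k'}$ on $\mathfrak{S}_n$ coincide; that is, the posets $\textsf{Star}_k(n)$ and $\textsf{Star}_{k'}(n)$ are equal.
   Context: $\mathfrak{S}_n$ is the symmetric group on $[n]$, products taken right to left. For a pivot $k\in[n]$, a star factorization of $\pi\in\mathfrak{S}_n$ is an expression $\pi=g_1\cdots g_r$ with each $g_i$ a transposition $(k\ i)$, $i\neq k$; it is transitive if all $(k\ i)$, $i\in[n]\setminus\{k\}$, occur; $\star_k(\pi)$ is the set of transitive star factorizations of $\pi$ of the minimum possible length $n+m-2$, $m$ the number of cycles of $\pi$ (fixed points included). $\sigma\preceq_k\pi$ means there exist $\gamma\in\star_k(\sigma)$ and $\delta\in\star_k(\pi)$ with $\gamma$ a not necessarily contiguous subword of $\delta$; $\textsf{Star}_k(n)$ is $\mathfrak{S}_n$ with the relation $\preceq_k$. *)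

theory Defs
  imports "HOL-Combinatorics.Permutations" "HOL-Combinatorics.Transposition" "HOL-Library.Sublist"
begin

text \<open>A word g_1 ... g_r of permutations is evaluated right to left,
  i.e. as the composition g_1 o g_2 o ... o g_r (g_r is applied first).\<close>

definition word_prod :: "(nat \<Rightarrow> nat) list \<Rightarrow> (nat \<Rightarrow> nat)" where
  "word_prod w = foldr (\<circ>) w id"

definition num_cycles :: "nat \<Rightarrow> (nat \<Rightarrow> nat) \<Rightarrow> nat" where
  "num_cycles n \<pi> = card ((\<lambda>x. {(\<pi> ^^ j) x | j. True}) ` {1..n})"

definition star_fact :: "nat \<Rightarrow> nat \<Rightarrow> (nat \<Rightarrow> nat) \<Rightarrow> (nat \<Rightarrow> nat) list \<Rightarrow> bool" where
  "star_fact n k \<pi> w \<longleftrightarrow>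
     (\<forall>g\<in>set w. \<exists>i\<in>{1..n}. i \<noteq> k \<and> g = transpose k i) \<and> word_prod w = \<pi>"

definition transitive_star :: "nat \<Rightarrow> nat \<Rightarrow> (nat \<Rightarrow> nat) list \<Rightarrow> bool" where
  "transitive_star n k w \<longleftrightarrow> (\<forall>i\<in>{1..n}. i \<noteq> k \<longrightarrow> transpose k i \<in> set w)"

definition star_set :: "nat \<Rightarrow> nat \<Rightarrow> (nat \<Rightarrow> nat) \<Rightarrow> (nat \<Rightarrow> nat) list set" where
  "star_set n k \<pi> = {w. star_fact n k \<pi> w \<and> transitive_star n k w
                         \<and> length w + 2 = n + num_cycles n \<pi>}"

definition star_le :: "nat \<Rightarrow> nat \<Rightarrow> (nat \<Rightarrow> nat) \<Rightarrow> (nat \<Rightarrow> nat) \<Rightarrow> bool" where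
  "star_le n k \<sigma> \<pi> \<longleftrightarrow> (\<exists>\<gamma>\<in>star_set n k \<sigma>. \<exists>\<delta>\<in>star_set n k \<pi>. subseq \<gamma> \<delta>)"

end

theory Submission
  imports Defs "HOL-Combinatorics.Orbits"
begin

text \<open>Both relations coincide with one that does not mention the pivot: \<sigma> \<preceq> \<pi> iff
  \<pi> = \<sigma> t_1 \<dots> t_r for transpositions t_i and \<pi> has exactly r more cycles than \<sigma>.
  Deleting a letter (k c) from a star word multiplies its product on the right by a conjugate of
  (k c), which is again a transposition. Conversely, a transitive star word contains every letter,
  and multiplying it on the right by (a b), with a, b \<noteq> k, is achieved by inserting (k b) just
  before the last occurrence of (k a), provided no (k b) follows it. The length condition
  n + m - 2 turns the number of inserted letters into the number of new cycles. This direction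
  needs a minimal transitive star factorization of \<sigma> to start from; one is built by turning the
  moved points into fixed points one at a time, each step splitting off a cycle.\<close>

lemma word_prod_Nil [simp]: "word_prod [] = id"
  by (simp add: word_prod_def)

lemma word_prod_Cons [simp]: "word_prod (g # w) = g \<circ> word_prod w"
  by (simp add: word_prod_def)

lemma word_prod_append [simp]: "word_prod (u @ v) = word_prod u \<circ> word_prod v"
  by (induction u) auto

section \<open>Cycles\<close>

lemma num_cycles_eq_card_orbits:
  assumes "permutation p"
  shows "num_cycles n p = card (orbit p ` {1..n})"
proof -
  have "(\<lambda>x. {(p ^^ j) x | j. True}) = orbit p"
    using orbit_altdef_permutation[OF assms] by auto
  then show ?thesis
    unfolding num_cycles_def by (rule arg_cong)
qed

lemma num_cycles_id [simp]: "num_cycles n id = n"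
proof -
  have "orbit id ` {1..n} = (\<lambda>y. {y}) ` {1..n}"
    by (rule image_cong) (simp_all add: orbit_eq_singleton_iff)
  moreover have "card ((\<lambda>y::nat. {y}) ` {1..n}) = n"
    by (subst card_image) (auto simp: inj_on_def)
  ultimately show ?thesis
    by (simp add: num_cycles_eq_card_orbits)
qed

lemma orbit_eq_of_mem_orbit:
  assumes "permutation f" "y \<in> orbit f x"
  shows "orbit f y = orbit f x"
proof
  show "orbit f y \<subseteq> orbit f x"
    using orbit_trans[OF _ assms(2)] by auto
  have "x \<in> orbit f y"
    using orbit_swap[OF permutation_self_in_orbit[OF assms(1)] assms(2)] .
  then show "orbit f x \<subseteq> orbit f y"
    using orbit_trans[of _ f x y] by auto
qed

lemma orbit_comp_transpose_fixed_point:
  assumes f: "permutation f" and fx: "f x = x" and xz: "x \<noteq> z"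
  shows "orbit (f \<circ> transpose x z) x = insert x (orbit f z)"
proof -
  define g where "g = f \<circ> transpose x z"
  have x_notin: "x \<notin> orbit f z"
    using orbit_eq_of_mem_orbit[OF f] fx xz permutation_self_in_orbit[OF f, of z]
    by (metis orbit_eq_singleton_iff singletonD)
  have gx: "g x = f z" and gz: "g z = x" and gy: "y \<noteq> x \<Longrightarrow> y \<noteq> z \<Longrightarrow> g y = f y" for y
    by (simp_all add: g_def fx)
  have "y \<in> insert x (orbit f z)" if "y \<in> orbit g x" for y
    using that
  proof induction
    case base
    then show ?case by (simp add: gx orbit.base)
  next
    case (step y)
    then show ?case
      by (cases "y = x"; cases "y = z") (auto simp: gx gz gy orbit.base orbit.step)
  qed
  moreover have "y \<in> orbit g x" if "y \<in> orbit f z" for y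
    using that
  proof induction
    case base
    then show ?case by (metis gx orbit.base)
  next
    case (step y)
    then show ?case
      using x_notin by (metis gx gy orbit.base orbit.step)
  qed
  moreover have "x \<in> orbit g x"
    unfolding g_def by (intro permutation_self_in_orbit permutation_compose f permutation_swap_id)
  ultimately show ?thesis
    unfolding g_def by blast
qed

lemma orbit_comp_transpose_other:
  assumes f: "permutation f" and fx: "f x = x" and y: "y \<notin> insert x (orbit f z)"
  shows "orbit (f \<circ> transpose x z) y = orbit f y"
proof (rule orbit_cong[OF permutation_self_in_orbit[OF f]])
  fix s
  assume "s \<in> orbit f y"
  then have "orbit f s = orbit f y"
    using orbit_eq_of_mem_orbit[OF f] by blast
  then have "s \<noteq> x" and "s \<noteq> z"
    using y fx permutation_self_in_orbit[OF f, of y]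
    by (metis insertCI orbit_eq_singleton_iff singletonD)+
  then show "(f \<circ> transpose x z) s = f s"
    by simp
qed

lemma num_cycles_comp_transpose_fixed_point:
  assumes f: "f permutes {1..n}" and x: "x \<in> {1..n}" and z: "z \<in> {1..n}"
    and xz: "x \<noteq> z" and fx: "f x = x"
  shows "num_cycles n (f \<circ> transpose x z) + 1 = num_cycles n f"
proof -
  define g where "g = f \<circ> transpose x z"
  define Oz where "Oz = orbit f z"
  have pf: "permutation f"
    using f by (auto simp: permutation_permutes)
  have pg: "permutation g"
    unfolding g_def by (intro permutation_compose pf permutation_swap_id)
  have self: "y \<in> orbit f y" for y
    using permutation_self_in_orbit[OF pf] .
  have ox: "orbit f x = {x}"
    using fx by (simp add: orbit_eq_singleton_iff)
  have ogx: "orbit g x = insert x Oz"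
    unfolding g_def Oz_def using orbit_comp_transpose_fixed_point[OF pf fx xz] .
  have orbit_f_other: "orbit f y \<notin> {{x}, Oz} \<longleftrightarrow> y \<notin> insert x Oz" for y
    unfolding Oz_def by (metis empty_iff insert_iff orbit_eq_of_mem_orbit ox pf self)
  have "orbit g ` {1..n} = insert (insert x Oz) (orbit f ` {1..n} - {{x}, Oz})"
  proof (intro equalityI subsetI)
    fix A
    assume "A \<in> orbit g ` {1..n}"
    then obtain y where y: "y \<in> {1..n}" "A = orbit g y"
      by blast
    show "A \<in> insert (insert x Oz) (orbit f ` {1..n} - {{x}, Oz})"
    proof (cases "y \<in> insert x Oz")
      case True
      then have "A = insert x Oz"
        using y ogx orbit_eq_of_mem_orbit[OF pg, of y x] by simp
      then show ?thesis by simp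
    next
      case False
      then have "A = orbit f y"
        using y orbit_comp_transpose_other[OF pf fx] by (simp add: g_def Oz_def)
      then show ?thesis
        using y False orbit_f_other by blast
    qed
  next
    fix A
    assume "A \<in> insert (insert x Oz) (orbit f ` {1..n} - {{x}, Oz})"
    then show "A \<in> orbit g ` {1..n}"
    proof
      assume "A = insert x Oz"
      then show ?thesis
        using x ogx by blast
    next
      assume "A \<in> orbit f ` {1..n} - {{x}, Oz}"
      then obtain y where "y \<in> {1..n}" "A = orbit f y" "y \<notin> insert x Oz"
        using orbit_f_other by blast
      then show ?thesis
        using orbit_comp_transpose_other[OF pf fx] by (force simp: g_def Oz_def)
    qed
  qed
  moreover have "insert x Oz \<notin> orbit f ` {1..n}"
  proof
    assume "insert x Oz \<in> orbit f ` {1..n}"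
    then obtain y where "insert x Oz = orbit f y"
      by blast
    then have "orbit f y = {x}"
      using ox orbit_eq_of_mem_orbit[OF pf, of x y] by blast
    then show False
      using \<open>insert x Oz = orbit f y\<close> self[of z] xz by (auto simp: Oz_def)
  qed
  moreover have "{x} \<in> orbit f ` {1..n}" and "Oz \<in> orbit f ` {1..n}" and "{x} \<noteq> Oz"
    using x z xz ox self[of z] by (auto simp: Oz_def)
  moreover have "card {{x}, Oz} \<le> card (orbit f ` {1..n})"
    using calculation by (intro card_mono) auto
  ultimately have "card (orbit g ` {1..n}) + 1 = card (orbit f ` {1..n})"
    by (simp add: card_Diff_subset)
  then show ?thesis
    using pf pg by (simp add: num_cycles_eq_card_orbits g_def)
qed

section \<open>Star words\<close>

definition star_word :: "nat \<Rightarrow> nat \<Rightarrow> (nat \<Rightarrow> nat) list \<Rightarrow> bool" where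
  "star_word n k w \<longleftrightarrow> (\<forall>g\<in>set w. \<exists>i\<in>{1..n}. i \<noteq> k \<and> g = transpose k i)"

definition transposition_word :: "nat \<Rightarrow> (nat \<Rightarrow> nat) list \<Rightarrow> bool" where
  "transposition_word n ts \<longleftrightarrow> (\<forall>t\<in>set ts. \<exists>a\<in>{1..n}. \<exists>b\<in>{1..n}. a \<noteq> b \<and> t = transpose a b)"

lemma star_word_simps [simp]:
  "star_word n k []"
  "star_word n k (g # w) \<longleftrightarrow> (\<exists>i\<in>{1..n}. i \<noteq> k \<and> g = transpose k i) \<and> star_word n k w"
  "star_word n k (u @ w) \<longleftrightarrow> star_word n k u \<and> star_word n k w"
  by (auto simp: star_word_def)

lemma star_fact_iff: "star_fact n k \<pi> w \<longleftrightarrow> star_word n k w \<and> word_prod w = \<pi>"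
  by (simp add: star_fact_def star_word_def)

lemma set_mono_subseq: "subseq xs ys \<Longrightarrow> set xs \<subseteq> set ys"
  by (auto elim: list_emb_set)

lemma star_word_subseq: "star_word n k w \<Longrightarrow> subseq v w \<Longrightarrow> star_word n k v"
  unfolding star_word_def using set_mono_subseq by (metis subsetD)

lemma transitive_star_subseq: "transitive_star n k v \<Longrightarrow> subseq v w \<Longrightarrow> transitive_star n k w"
  unfolding transitive_star_def using set_mono_subseq by (metis subsetD)

lemma star_word_permutes:
  assumes "star_word n k w" "k \<in> {1..n}"
  shows "word_prod w permutes {1..n}"
  using assms
proof (induction w)
  case Nil
  then show ?case by (simp only: word_prod_Nil permutes_id)
next
  case (Cons g w)
  then obtain i where "i \<in> {1..n}" "g = transpose k i"
    by auto
  then have "g permutes {1..n}"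
    using Cons.prems(2) by (simp add: permutes_swap_id)
  moreover have "word_prod w permutes {1..n}"
    using Cons by simp
  ultimately show ?case
    by (simp only: word_prod_Cons permutes_compose)
qed

lemma bij_word_prod: "\<forall>g\<in>set w. bij g \<Longrightarrow> bij (word_prod w)"
  by (induction w) (auto intro: bij_comp)

lemma word_prod_fixes:
  assumes "\<forall>g\<in>set w. \<exists>i. g = transpose k i" "a \<noteq> k" "transpose k a \<notin> set w"
  shows "word_prod w a = a"
  using assms
proof (induction w)
  case (Cons g w)
  then obtain i where "g = transpose k i" "i \<noteq> a"
    by auto
  then show ?case
    using Cons by simp
qed simp

lemma transpose_left_eq_iff: "transpose k i = transpose k j \<longleftrightarrow> i = j"
  by (metis transpose_apply_first)

lemma transpose_comp_permutes:
  assumes "p permutes S" "a \<in> S" "b \<in> S" "a \<noteq> b"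
  shows "\<exists>c\<in>S. \<exists>d\<in>S. c \<noteq> d \<and> transpose a b \<circ> p = p \<circ> transpose c d"
proof (intro bexI conjI)
  show "transpose a b \<circ> p = p \<circ> transpose (inv p a) (inv p b)"
    using assms(1) by (intro transpose_comp_eq) (rule permutes_bij)
  show "inv p a \<in> S" "inv p b \<in> S"
    using assms by (simp_all add: permutes_in_image permutes_inv)
  show "inv p a \<noteq> inv p b"
    using assms by (metis permutes_inverses(1))
qed

lemma transposition_word_simps [simp]:
  "transposition_word n []"
  "transposition_word n (t # ts) \<longleftrightarrow>
     (\<exists>a\<in>{1..n}. \<exists>b\<in>{1..n}. a \<noteq> b \<and> t = transpose a b) \<and> transposition_word n ts"
  by (auto simp: transposition_word_def)

lemma star_word_imp_transposition_word:
  assumes "star_word n k w" "k \<in> {1..n}"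
  shows "transposition_word n w"
  unfolding transposition_word_def
proof
  fix t
  assume "t \<in> set w"
  then obtain i where "i \<in> {1..n}" "i \<noteq> k" "t = transpose k i"
    using assms(1) unfolding star_word_def by blast
  then show "\<exists>a\<in>{1..n}. \<exists>b\<in>{1..n}. a \<noteq> b \<and> t = transpose a b"
    using assms(2) by (intro bexI[of _ k] bexI[of _ i]) auto
qed

lemma subseq_star_word_factor:
  assumes "subseq \<gamma> \<delta>" "star_word n k \<delta>" "k \<in> {1..n}"
  shows "\<exists>ts. transposition_word n ts \<and> length \<delta> = length \<gamma> + length ts
           \<and> word_prod \<delta> = word_prod \<gamma> \<circ> word_prod ts"
  using assms
proof (induction rule: list_emb.induct)
  case (list_emb_Nil ys)
  then show ?case
    using star_word_imp_transposition_word by auto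
next
  case (list_emb_Cons xs ys y)
  obtain c where c: "c \<in> {1..n}" "c \<noteq> k" "y = transpose k c" and "star_word n k ys"
    using list_emb_Cons.prems(1) by auto
  then obtain ts where ts: "transposition_word n ts" "length ys = length xs + length ts"
      "word_prod ys = word_prod xs \<circ> word_prod ts"
    using list_emb_Cons.IH list_emb_Cons.prems(2) by blast
  have "word_prod xs permutes {1..n}"
    using star_word_subseq[OF \<open>star_word n k ys\<close> list_emb_Cons.hyps] list_emb_Cons.prems(2)
    by (rule star_word_permutes)
  then obtain a b where ab: "a \<in> {1..n}" "b \<in> {1..n}" "a \<noteq> b"
      and conj: "y \<circ> word_prod xs = word_prod xs \<circ> transpose a b"
    using transpose_comp_permutes[of _ "{1..n}" k c] c list_emb_Cons.prems(2) by blast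
  show ?case
  proof (intro exI conjI)
    show "transposition_word n (transpose a b # ts)"
      using ab ts(1) by (simp only: transposition_word_simps)
        (intro conjI bexI[of _ a] bexI[of _ b]; simp)
    show "word_prod (y # ys) = word_prod xs \<circ> word_prod (transpose a b # ts)"
      using ts(3) conj by (simp flip: comp_assoc)
  qed (use ts(2) in simp)
next
  case (list_emb_Cons2 x y xs ys)
  then have "star_word n k ys"
    by simp
  then obtain ts where "transposition_word n ts" "length ys = length xs + length ts"
      "word_prod ys = word_prod xs \<circ> word_prod ts"
    using list_emb_Cons2.IH list_emb_Cons2.prems(2) by blast
  then show ?case
    using list_emb_Cons2.hyps by (intro exI[of _ ts]) (simp add: comp_assoc)
qed

lemma word_prod_insert_before_last:
  assumes v: "\<forall>g\<in>set v. \<exists>i. g = transpose k i"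
    and a: "transpose k a \<notin> set v" "a \<noteq> k"
    and b: "transpose k b \<notin> set v" "b \<noteq> k"
    and ab: "a \<noteq> b"
  shows "word_prod (u @ transpose k b # transpose k a # v)
           = word_prod (u @ transpose k a # v) \<circ> transpose a b"
proof -
  define V where "V = transpose k a \<circ> word_prod v"
  have "bij V"
    unfolding V_def using v by (auto intro!: bij_comp bij_word_prod)
  moreover have "V a = k" "V b = b"
    unfolding V_def using word_prod_fixes[OF v] a b ab by simp_all
  ultimately have "inv V k = a" "inv V b = b"
    by (auto intro: inv_f_eq bij_is_inj)
  then have "transpose k b \<circ> V = V \<circ> transpose a b"
    using transpose_comp_eq[OF \<open>bij V\<close>, of k b] by simp
  then show ?thesis
    by (simp add: V_def comp_assoc)
qed

lemma star_word_insert_before_last: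
  assumes w: "star_word n k (u @ transpose k c # v)"
    and last: "transpose k c \<notin> set v" "transpose k d \<notin> set v"
    and cd: "c \<noteq> k" "d \<noteq> k" "d \<in> {1..n}" "c \<noteq> d"
  shows "star_word n k (u @ transpose k d # transpose k c # v)"
    and "word_prod (u @ transpose k d # transpose k c # v)
           = word_prod (u @ transpose k c # v) \<circ> transpose c d"
proof -
  have "\<exists>i\<in>{1..n}. i \<noteq> k \<and> transpose k d = transpose k i"
    using cd by (intro bexI[of _ d]) simp_all
  then show "star_word n k (u @ transpose k d # transpose k c # v)"
    using w by simp
  have "\<forall>g\<in>set v. \<exists>i. g = transpose k i"
    using w unfolding star_word_def by auto
  then show "word_prod (u @ transpose k d # transpose k c # v)
      = word_prod (u @ transpose k c # v) \<circ> transpose c d"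
    by (rule word_prod_insert_before_last[OF _ last(1) cd(1) last(2) cd(2,4)])
qed

lemma star_word_insert_transposition:
  assumes w: "star_word n k w" "transitive_star n k w"
    and ab: "a \<in> {1..n}" "b \<in> {1..n}" "a \<noteq> b"
  shows "\<exists>w'. star_word n k w' \<and> subseq w w' \<and> length w' = Suc (length w)
           \<and> word_prod w' = word_prod w \<circ> transpose a b"
proof -
  have append: "\<exists>w'. star_word n k w' \<and> subseq w w' \<and> length w' = Suc (length w)
           \<and> word_prod w' = word_prod w \<circ> transpose a b"
    if "c \<in> {1..n}" "c \<noteq> k" "transpose k c = transpose a b" for c
    using that w(1) by (intro exI[of _ "w @ [transpose k c]"]) auto
  consider "a = k" | "b = k" | "a \<noteq> k" "b \<noteq> k"
    by blast
  then show ?thesis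
  proof cases
    case 1
    then show ?thesis
      using append[of b] ab by simp
  next
    case 2
    then show ?thesis
      using append[of a] ab by (simp add: transpose_commute)
  next
    case 3
    have insert: "\<exists>w'. star_word n k w' \<and> subseq w w' \<and> length w' = Suc (length w)
           \<and> word_prod w' = word_prod w \<circ> transpose a b"
      if uv: "w = u @ transpose k c # v" and "transpose k c \<notin> set v" "transpose k d \<notin> set v"
        and "c \<noteq> k" "d \<noteq> k" "d \<in> {1..n}" "c \<noteq> d" "transpose c d = transpose a b"
      for u c v d
    proof (intro exI conjI)
      show "subseq w (u @ transpose k d # transpose k c # v)"
        unfolding uv subseq_append' by (intro list_emb_Cons subseq_order.order_refl)
    qed (use that w(1) star_word_insert_before_last[of n k u c v d] in simp_all)
    have "transpose k a \<in> set w"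
      using w(2) ab 3 unfolding transitive_star_def by simp
    then obtain u g v where uv: "w = u @ g # v" and g: "g \<in> {transpose k a, transpose k b}"
        and last: "\<forall>h\<in>set v. h \<notin> {transpose k a, transpose k b}"
      using split_list_last_prop[of w "\<lambda>h. h \<in> {transpose k a, transpose k b}"] by auto
    have "transpose k a \<notin> set v" "transpose k b \<notin> set v"
      using last by (metis insertCI)+
    with g uv ab 3 show ?thesis
      using insert[of u a v b] insert[of u b v a] by (auto simp: transpose_commute)
  qed
qed

lemma star_word_insert_transpositions:
  assumes "transposition_word n ts" "star_word n k w" "transitive_star n k w"
  shows "\<exists>w'. star_word n k w' \<and> subseq w w' \<and> length w' = length w + length ts
           \<and> word_prod w' = word_prod w \<circ> word_prod ts"
  using assms
proof (induction ts arbitrary: w)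
  case Nil
  then show ?case by auto
next
  case (Cons t ts)
  then obtain a b where ab: "a \<in> {1..n}" "b \<in> {1..n}" "a \<noteq> b" "t = transpose a b"
    by auto
  obtain w1 where w1: "star_word n k w1" "subseq w w1" "length w1 = Suc (length w)"
      "word_prod w1 = word_prod w \<circ> t"
    using star_word_insert_transposition[OF Cons.prems(2,3) ab(1-3)] ab(4) by blast
  have "transitive_star n k w1"
    using Cons.prems(3) w1(2) by (rule transitive_star_subseq)
  moreover have "transposition_word n ts"
    using Cons.prems(1) by simp
  ultimately obtain w' where "star_word n k w'" "subseq w1 w'" "length w' = length w1 + length ts"
      "word_prod w' = word_prod w1 \<circ> word_prod ts"
    using Cons.IH w1(1) by blast
  then show ?case
    using w1 subseq_order.trans[of w w1 w'] by (intro exI[of _ w']) (auto simp: comp_assoc)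
qed

section \<open>Minimal transitive star factorizations\<close>

definition nonpivot_support :: "nat \<Rightarrow> nat \<Rightarrow> (nat \<Rightarrow> nat) \<Rightarrow> nat set" where
  "nonpivot_support n k \<sigma> = {i\<in>{1..n}. i \<noteq> k \<and> \<sigma> i \<noteq> i}"

text \<open>A star factorization whose letters are exactly the (k i) with i \<noteq> k moved by \<sigma>.
  Its length is n + m - 2 minus twice the number of fixed points other than k, so padding it with
  (k i)(k i) for each such fixed point yields a transitive factorization of the minimal length.\<close>

definition support_star_fact :: "nat \<Rightarrow> nat \<Rightarrow> (nat \<Rightarrow> nat) \<Rightarrow> (nat \<Rightarrow> nat) list \<Rightarrow> bool" where
  "support_star_fact n k \<sigma> w \<longleftrightarrow>
     set w = transpose k ` nonpivot_support n k \<sigma> \<and> word_prod w = \<sigma>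
     \<and> length w + n = num_cycles n \<sigma> + 2 * card (nonpivot_support n k \<sigma>)"

lemma star_letters_comp_transpose:
  assumes w': "set w' = transpose k ` M'" and fin: "finite M'"
    and x: "x \<notin> M'" "x \<noteq> k" and xz: "x \<noteq> z"
  defines "M \<equiv> insert x M' \<union> ({z} - {k})"
  shows "\<exists>w. set w = transpose k ` M \<and> word_prod w = word_prod w' \<circ> transpose x z
           \<and> length w + 2 * card M' + 1 = length w' + 2 * card M"
proof (cases "z = k")
  case True
  then show ?thesis
    using w' fin x by (intro exI[of _ "w' @ [transpose k x]"]) (auto simp: M_def transpose_commute)
next
  case z_k: False
  have tkx: "transpose k x \<notin> set w'"
    using x by (auto simp: w' transpose_left_eq_iff)
  show ?thesis
  proof (cases "z \<in> M'")
    case True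
    then have "transpose k z \<in> set w'"
      by (simp add: w')
    then obtain u v where uv: "w' = u @ transpose k z # v" "transpose k z \<notin> set v"
      using split_list_last by metis
    have "\<forall>g\<in>set v. \<exists>i. g = transpose k i"
      using uv(1) w' by auto
    then have "word_prod (u @ transpose k x # transpose k z # v) = word_prod w' \<circ> transpose z x"
      using word_prod_insert_before_last[of v k z x u] uv tkx x(2) z_k xz by simp
    then show ?thesis
      using uv(1) True z_k fin x w'
      by (intro exI[of _ "u @ transpose k x # transpose k z # v"])
        (auto simp: M_def transpose_commute insert_absorb)
  next
    case False
    have "transpose k z \<circ> transpose k x \<circ> transpose k z = transpose z x"
      using transpose_comp_triple[of z x k] xz x(2) by (simp add: transpose_commute)
    then have "word_prod (w' @ [transpose k z, transpose k x, transpose k z])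
        = word_prod w' \<circ> transpose x z"
      by (simp add: comp_assoc transpose_commute)
    then show ?thesis
      using False z_k fin x xz w'
      by (intro exI[of _ "w' @ [transpose k z, transpose k x, transpose k z]"]) (auto simp: M_def)
  qed
qed

lemma support_star_fact_comp_transpose:
  assumes \<sigma>: "\<sigma> permutes {1..n}" and x: "x \<in> {1..n}" "x \<noteq> k" "\<sigma> x \<noteq> x" and z: "\<sigma> z = x"
    and w': "support_star_fact n k (\<sigma> \<circ> transpose x z) w'"
  shows "\<exists>w. support_star_fact n k \<sigma> w"
proof -
  define \<sigma>' where "\<sigma>' = \<sigma> \<circ> transpose x z"
  define M' where "M' = nonpivot_support n k \<sigma>'"
  have xz: "x \<noteq> z"
    using x z by auto
  have z_in: "z \<in> {1..n}"
    using permutes_not_in[OF \<sigma>] x z by metis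
  have \<sigma>': "\<sigma>' permutes {1..n}"
    unfolding \<sigma>'_def using \<sigma> x z_in by (intro permutes_compose permutes_swap_id)
  have \<sigma>'_x: "\<sigma>' x = x" and \<sigma>'_z: "\<sigma>' z = \<sigma> x"
    and \<sigma>'_other: "y \<noteq> x \<Longrightarrow> y \<noteq> z \<Longrightarrow> \<sigma>' y = \<sigma> y" for y
    by (simp_all add: \<sigma>'_def z)
  have \<sigma>_eq: "\<sigma>' \<circ> transpose x z = \<sigma>"
    by (simp add: \<sigma>'_def comp_assoc)
  have cycles: "num_cycles n \<sigma>' = num_cycles n \<sigma> + 1"
    using num_cycles_comp_transpose_fixed_point[OF \<sigma>' x(1) z_in xz \<sigma>'_x] \<sigma>_eq by simp
  have M: "nonpivot_support n k \<sigma> = insert x M' \<union> ({z} - {k})" and x_notin: "x \<notin> M'"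
    using x z xz z_in \<sigma>'_x \<sigma>'_z \<sigma>'_other
    by (auto simp: M'_def nonpivot_support_def) (metis \<sigma>'_other)
  have w'_set: "set w' = transpose k ` M'" and w'_prod: "word_prod w' = \<sigma>'"
    and w'_len: "length w' + n = num_cycles n \<sigma>' + 2 * card M'"
    using w' by (simp_all add: support_star_fact_def M'_def \<sigma>'_def)
  have "finite M'"
    by (simp add: M'_def nonpivot_support_def)
  then obtain w where "set w = transpose k ` nonpivot_support n k \<sigma>" "word_prod w = \<sigma>"
      "length w + 2 * card M' + 1 = length w' + 2 * card (nonpivot_support n k \<sigma>)"
    using star_letters_comp_transpose[OF w'_set _ x_notin x(2) xz] M w'_prod \<sigma>_eq by metis
  then show ?thesis
    using w'_len cycles unfolding support_star_fact_def by (intro exI[of _ w]) simp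
qed

lemma nonpivot_support_empty_imp_id:
  assumes \<sigma>: "\<sigma> permutes {1..n}" and empty: "nonpivot_support n k \<sigma> = {}"
  shows "\<sigma> = id"
proof
  fix i
  show "\<sigma> i = id i"
  proof (rule ccontr)
    assume moved: "\<sigma> i \<noteq> id i"
    then have i: "i \<in> {1..n}"
      using permutes_not_in[OF \<sigma>] by auto
    have fixed: "j \<in> {1..n} \<Longrightarrow> j \<noteq> k \<Longrightarrow> \<sigma> j = j" for j
      using empty unfolding nonpivot_support_def by blast
    then have "\<sigma> i \<noteq> k"
      using i moved by fastforce
    moreover have "\<sigma> (\<sigma> i) \<noteq> \<sigma> i"
      using moved permutes_inj[OF \<sigma>] by (auto dest: injD)
    ultimately show False
      using fixed[of "\<sigma> i"] permutes_in_image[OF \<sigma>] i by simp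
  qed
qed

lemma support_star_fact_exists:
  assumes "\<sigma> permutes {1..n}"
  shows "\<exists>w. support_star_fact n k \<sigma> w"
  using assms
proof (induction "card {i\<in>{1..n}. \<sigma> i \<noteq> i}" arbitrary: \<sigma> rule: less_induct)
  case less
  show ?case
  proof (cases "nonpivot_support n k \<sigma> = {}")
    case True
    then have "\<sigma> = id"
      using less.prems nonpivot_support_empty_imp_id by blast
    then show ?thesis
      by (intro exI[of _ "[]"]) (simp add: support_star_fact_def nonpivot_support_def)
  next
    case False
    then obtain x where x: "x \<in> {1..n}" "x \<noteq> k" "\<sigma> x \<noteq> x"
      by (auto simp: nonpivot_support_def)
    define z where "z = inv \<sigma> x"
    have z: "\<sigma> z = x" "z \<in> {1..n}"
      using permutes_inverses(1)[OF less.prems] permutes_in_image[OF permutes_inv[OF less.prems]] x(1)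
      by (simp_all add: z_def)
    have "{i\<in>{1..n}. (\<sigma> \<circ> transpose x z) i \<noteq> i} \<subset> {i\<in>{1..n}. \<sigma> i \<noteq> i}"
      using x z by (auto simp: transpose_def split: if_splits)
    then have "card {i\<in>{1..n}. (\<sigma> \<circ> transpose x z) i \<noteq> i} < card {i\<in>{1..n}. \<sigma> i \<noteq> i}"
      by (intro psubset_card_mono) auto
    moreover have "\<sigma> \<circ> transpose x z permutes {1..n}"
      using less.prems x(1) z(2) by (intro permutes_compose permutes_swap_id)
    ultimately obtain w' where "support_star_fact n k (\<sigma> \<circ> transpose x z) w'"
      using less.hyps by blast
    then show ?thesis
      using support_star_fact_comp_transpose[OF less.prems x z(1)] by blast
  qed
qed

lemma doubled_transpositions:
  "word_prod (concat (map (\<lambda>i. [transpose k i, transpose k i]) L)) = id"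
  "set (concat (map (\<lambda>i. [transpose k i, transpose k i]) L)) = transpose k ` set L"
  "length (concat (map (\<lambda>i. [transpose k i, transpose k i]) L)) = 2 * length L"
  by (induction L) auto

lemma star_set_nonempty:
  assumes k: "k \<in> {1..n}" and \<sigma>: "\<sigma> permutes {1..n}"
  shows "star_set n k \<sigma> \<noteq> {}"
proof -
  define M where "M = nonpivot_support n k \<sigma>"
  define F where "F = {1..n} - {k} - M"
  define pad where "pad = concat (map (\<lambda>i. [transpose k i, transpose k i]) (sorted_list_of_set F))"
  obtain w where w: "set w = transpose k ` M" "word_prod w = \<sigma>"
      "length w + n = num_cycles n \<sigma> + 2 * card M"
    using support_star_fact_exists[OF \<sigma>, of k] unfolding support_star_fact_def M_def by blast
  have M_sub: "M \<subseteq> {1..n} - {k}"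
    by (auto simp: M_def nonpivot_support_def)
  have fin: "finite F"
    by (simp add: F_def)
  have pad_set: "set pad = transpose k ` F" and pad_len: "length pad = 2 * card F"
    unfolding pad_def doubled_transpositions using fin by simp_all
  have "card M \<le> card ({1..n} - {k})"
    using M_sub by (intro card_mono) auto
  then have "card F + card M + 1 = n"
    using M_sub k card_Diff_subset[OF _ M_sub] finite_subset[OF M_sub] by (simp add: F_def) linarith
  then have "length (pad @ w) + 2 = n + num_cycles n \<sigma>"
    using w(3) pad_len by simp
  moreover have "star_fact n k \<sigma> (pad @ w)"
    using w(1,2) M_sub pad_set doubled_transpositions(1)
    by (auto simp: star_fact_def F_def pad_def)
  moreover have "transitive_star n k (pad @ w)"
    using w(1) pad_set by (auto simp: transitive_star_def F_def)
  ultimately show ?thesis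
    unfolding star_set_def by blast
qed

definition cycle_split_le :: "nat \<Rightarrow> (nat \<Rightarrow> nat) \<Rightarrow> (nat \<Rightarrow> nat) \<Rightarrow> bool" where
  "cycle_split_le n \<sigma> \<pi> \<longleftrightarrow> (\<exists>ts. transposition_word n ts \<and> \<pi> = \<sigma> \<circ> word_prod ts
                                 \<and> num_cycles n \<pi> = num_cycles n \<sigma> + length ts)"

lemma star_le_iff_cycle_split_le:
  assumes k: "k \<in> {1..n}" and \<sigma>: "\<sigma> permutes {1..n}"
  shows "star_le n k \<sigma> \<pi> \<longleftrightarrow> cycle_split_le n \<sigma> \<pi>"
proof
  assume "star_le n k \<sigma> \<pi>"
  then obtain \<gamma> \<delta> where \<gamma>: "\<gamma> \<in> star_set n k \<sigma>" and \<delta>: "\<delta> \<in> star_set n k \<pi>"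
      and sub: "subseq \<gamma> \<delta>"
    unfolding star_le_def by blast
  then obtain ts where "transposition_word n ts" "length \<delta> = length \<gamma> + length ts"
      "word_prod \<delta> = word_prod \<gamma> \<circ> word_prod ts"
    using subseq_star_word_factor[OF sub _ k] by (auto simp: star_set_def star_fact_iff)
  then show "cycle_split_le n \<sigma> \<pi>"
    using \<gamma> \<delta> unfolding cycle_split_le_def by (auto simp: star_set_def star_fact_iff)
next
  assume "cycle_split_le n \<sigma> \<pi>"
  then obtain ts where ts: "transposition_word n ts" "\<pi> = \<sigma> \<circ> word_prod ts"
      "num_cycles n \<pi> = num_cycles n \<sigma> + length ts"
    unfolding cycle_split_le_def by blast
  obtain \<gamma> where \<gamma>: "\<gamma> \<in> star_set n k \<sigma>"
    using star_set_nonempty[OF k \<sigma>] by blast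
  then obtain \<delta> where "star_word n k \<delta>" "subseq \<gamma> \<delta>" "length \<delta> = length \<gamma> + length ts"
      "word_prod \<delta> = word_prod \<gamma> \<circ> word_prod ts"
    using star_word_insert_transpositions[OF ts(1)] by (auto simp: star_set_def star_fact_iff)
  moreover have "transitive_star n k \<delta>"
    using \<gamma> \<open>subseq \<gamma> \<delta>\<close> transitive_star_subseq by (auto simp: star_set_def)
  ultimately have "\<delta> \<in> star_set n k \<pi>"
    using \<gamma> ts(2,3) by (auto simp: star_set_def star_fact_iff)
  then show "star_le n k \<sigma> \<pi>"
    unfolding star_le_def using \<gamma> \<open>subseq \<gamma> \<delta>\<close> by blast
qed

theorem mainTheorem8:
  fixes n k k' :: nat
  assumes "n \<ge> 1" and "k \<in> {1..n}" and "k' \<in> {1..n}"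
  shows "\<forall>\<sigma> \<pi>. \<sigma> permutes {1..n} \<longrightarrow> \<pi> permutes {1..n} \<longrightarrow>
           (star_le n k \<sigma> \<pi> \<longleftrightarrow> star_le n k' \<sigma> \<pi>)"
  using star_le_iff_cycle_split_le[OF assms(2)] star_le_iff_cycle_split_le[OF assms(3)] by blast

end
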